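(* Let $X$ and $Y$ be non-negative random variables. Then $X\geq_{ss}Y$ if and only if $h(X)\geq_{ss}h(Y)$ for every star-shaped function $h$.
   Context: A function $h:[0,\infty)\to[0,\infty)$ with $h(0)=0$ is star-shaped (at the origin) if $x\mapsto h(x)/x$ is increasing (non-decreasing) on $(0,\infty)$. For non-negative random variables $X,Y$, $X\geq_{ss}Y$ (star-shaped order) means $\mathbb{E}\,u(X)\geq\mathbb{E}\,u(Y)$ for every star-shaped function $u$ for which the expectations exist. *)

theory Defs
  imports "HOL-Probability.Probability"
begin

definition star_shaped :: "(real \<Rightarrow> real) \<Rightarrow> bool" where
  "star_shaped h \<longleftrightarrow> h 0 = 0 \<and> (\<forall>x\<ge>0. h x \<ge> 0) \<and> mono_on {0<..} (\<lambda>x. h x / x)"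

text \<open>Since star-shaped u are non-negative, E u(X) always exists in [0,\<infinity>];
  expectations are taken as non-negative (extended) integrals.\<close>
definition ss_ge :: "'a measure \<Rightarrow> ('a \<Rightarrow> real) \<Rightarrow> 'b measure \<Rightarrow> ('b \<Rightarrow> real) \<Rightarrow> bool" where
  "ss_ge M X N Y \<longleftrightarrow> (\<forall>u. star_shaped u \<longrightarrow>
      (\<integral>\<^sup>+ \<omega>. ennreal (u (X \<omega>)) \<partial>M) \<ge> (\<integral>\<^sup>+ \<omega>. ennreal (u (Y \<omega>)) \<partial>N))"

end

theory Submission
  imports Defs
begin

text \<open>Star-shaped functions are closed under composition and contain the identity. Hence if
  \<open>X \<ge>ss Y\<close> and \<open>h\<close> is star-shaped, every test function \<open>u \<circ> h\<close> is again admissible, which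
  gives \<open>h(X) \<ge>ss h(Y)\<close>; conversely take \<open>h = id\<close>. No measurability or integrability is needed,
  since the expectations are non-negative integrals.\<close>

lemma star_shaped_id: "star_shaped (\<lambda>x. x)"
  unfolding star_shaped_def by (auto intro!: mono_onI)

lemma star_shaped_zero: "star_shaped h \<Longrightarrow> h 0 = 0"
  unfolding star_shaped_def by blast

lemma star_shaped_nonneg: "star_shaped h \<Longrightarrow> 0 \<le> x \<Longrightarrow> 0 \<le> h x"
  unfolding star_shaped_def by blast

lemma star_shaped_ratio_mono:
  "star_shaped h \<Longrightarrow> 0 < x \<Longrightarrow> x \<le> y \<Longrightarrow> h x / x \<le> h y / y"
  unfolding star_shaped_def by (auto elim!: mono_onD)

lemma star_shaped_mono:
  assumes h: "star_shaped h" and "0 \<le> x" "x \<le> y"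
  shows "h x \<le> h y"
proof (cases "x = 0")
  case True
  then show ?thesis
    using assms star_shaped_zero[OF h] star_shaped_nonneg[OF h] by simp
next
  case False
  with assms have "0 < x" "0 < y" by auto
  have "h x = x * (h x / x)" using \<open>0 < x\<close> by simp
  also have "\<dots> \<le> y * (h y / y)"
    using \<open>x \<le> y\<close> \<open>0 < x\<close> star_shaped_ratio_mono[OF h \<open>0 < x\<close> \<open>x \<le> y\<close>]
      star_shaped_nonneg[OF h, of x]
    by (intro mult_mono) auto
  also have "\<dots> = h y" using \<open>0 < y\<close> by simp
  finally show ?thesis .
qed

lemma star_shaped_comp:
  assumes u: "star_shaped u" and h: "star_shaped h"
  shows "star_shaped (u \<circ> h)"
  unfolding star_shaped_def
proof (intro conjI allI impI mono_onI)
  show "(u \<circ> h) 0 = 0" by (simp add: star_shaped_zero[OF u] star_shaped_zero[OF h])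
next
  fix x :: real
  assume "0 \<le> x"
  then show "0 \<le> (u \<circ> h) x" by (simp add: star_shaped_nonneg[OF u] star_shaped_nonneg[OF h])
next
  fix x y :: real
  assume "x \<in> {0<..}" "y \<in> {0<..}" "x \<le> y"
  then have "0 < x" "0 < y" by auto
  have "0 \<le> h x" "h x \<le> h y"
    using \<open>0 < x\<close> \<open>x \<le> y\<close> star_shaped_nonneg[OF h] star_shaped_mono[OF h] by auto
  have uy: "0 \<le> u (h y) / y"
    using \<open>0 < y\<close> \<open>0 \<le> h x\<close> \<open>h x \<le> h y\<close> star_shaped_nonneg[OF u] by simp
  show "(u \<circ> h) x / x \<le> (u \<circ> h) y / y"
  proof (cases "h x = 0")
    case True
    then show ?thesis using uy by (simp add: star_shaped_zero[OF u])
  next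
    case False
    with \<open>0 \<le> h x\<close> have "0 < h x" by simp
    \<comment> \<open>\<open>u(h x)/x\<close> factors into the non-negative, non-decreasing ratios \<open>u(h x)/h x\<close> and \<open>h x/x\<close>.\<close>
    have "(u \<circ> h) x / x = (u (h x) / h x) * (h x / x)" using \<open>0 < h x\<close> by simp
    also have "\<dots> \<le> (u (h y) / h y) * (h y / y)"
      using star_shaped_ratio_mono[OF u \<open>0 < h x\<close> \<open>h x \<le> h y\<close>]
        star_shaped_ratio_mono[OF h \<open>0 < x\<close> \<open>x \<le> y\<close>]
        star_shaped_nonneg[OF u, of "h y"] \<open>0 < x\<close> \<open>0 < h x\<close> \<open>h x \<le> h y\<close>
      by (intro mult_mono) auto
    also have "\<dots> = (u \<circ> h) y / y" using \<open>0 < h x\<close> \<open>h x \<le> h y\<close> by simp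
    finally show ?thesis .
  qed
qed

lemma ss_ge_comp:
  assumes "ss_ge M X N Y" and "star_shaped h"
  shows "ss_ge M (h \<circ> X) N (h \<circ> Y)"
  unfolding ss_ge_def
proof (intro allI impI)
  fix u
  assume "star_shaped u"
  then have "star_shaped (u \<circ> h)" using assms(2) by (rule star_shaped_comp)
  with assms(1) have "(\<integral>\<^sup>+ \<omega>. ennreal ((u \<circ> h) (X \<omega>)) \<partial>M) \<ge> (\<integral>\<^sup>+ \<omega>. ennreal ((u \<circ> h) (Y \<omega>)) \<partial>N)"
    unfolding ss_ge_def by blast
  then show "(\<integral>\<^sup>+ \<omega>. ennreal (u ((h \<circ> X) \<omega>)) \<partial>M) \<ge> (\<integral>\<^sup>+ \<omega>. ennreal (u ((h \<circ> Y) \<omega>)) \<partial>N)"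
    by (simp only: comp_def)
qed

theorem lemma12:
  fixes M :: "'a measure" and N :: "'b measure"
    and X :: "'a \<Rightarrow> real" and Y :: "'b \<Rightarrow> real"
  assumes "prob_space M" and "prob_space N"
    and "X \<in> borel_measurable M" and "Y \<in> borel_measurable N"
    and "\<forall>\<omega>\<in>space M. X \<omega> \<ge> 0" and "\<forall>\<omega>\<in>space N. Y \<omega> \<ge> 0"
  shows "ss_ge M X N Y \<longleftrightarrow> (\<forall>h. star_shaped h \<longrightarrow> ss_ge M (h \<circ> X) N (h \<circ> Y))"
proof
  assume "ss_ge M X N Y"
  then show "\<forall>h. star_shaped h \<longrightarrow> ss_ge M (h \<circ> X) N (h \<circ> Y)"
    by (blast intro: ss_ge_comp)
next
  assume "\<forall>h. star_shaped h \<longrightarrow> ss_ge M (h \<circ> X) N (h \<circ> Y)"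
  then have "ss_ge M ((\<lambda>x. x) \<circ> X) N ((\<lambda>x. x) \<circ> Y)" using star_shaped_id by blast
  then show "ss_ge M X N Y" by (simp add: comp_def)
qed

end
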